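(* Let $n,m\in\mathbb{N}$, $\beta\in\mathbb{C}$ and $u\in S(n,\beta)$ (so also $u\in S(nm,\beta)$). Suppose the representatives $\{R_j^{nm,1}\}_{j\in I_{nm}}$ of $\Gamma_0(nm)\backslash SL(2,\mathbb{Z})$ and $\{R_i^{n,1}\}_{i\in I_n}$ of $\Gamma_0(n)\backslash SL(2,\mathbb{Z})$ satisfy $R_j^{nm,1}=R_{r(j)}^{nm,n}R^{n,1}_{\sigma_{m,n}(j)}$ for all $j\in I_{nm}$, where each $R_{r(j)}^{nm,n}$ is a representative of a coset in $\Gamma_0(nm)\backslash\Gamma_0(n)$. Then $(\mathrm{P}_{nm}\Pi_{nm}u)_j=(\mathrm{P}_n\Pi_nu)_{\sigma_{m,n}(j)}$ for all $j\in I_{nm}$.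
   Context: $\Gamma_0(N)=\{\begin{pmatrix}a&b\\c&d\end{pmatrix}\in SL(2,\mathbb{Z}):N\mid c\}$. $S(N,\beta)$: Maass cusp forms for $\Gamma_0(N)$ with spectral parameter $\beta$ (real-analytic, $\Gamma_0(N)$-invariant, eigenvalue $\beta(1-\beta)$ of $-y^2(\partial_x^2+\partial_y^2)$, rapid decay in cusps). $I_N$ indexes the right cosets $\Gamma_0(N)\backslash SL(2,\mathbb{Z})$ (coset $\Gamma_0(N)\begin{pmatrix}a&b\\c&d\end{pmatrix}$ labelled by the class $[c:d]_N$ of $(c,d)$ modulo $(x,y)\sim(kx,ky)\bmod N$, $\gcd(k,N)=1$), $R_i^{N,1}$ a representative of coset $i$; $\sigma_{m,n}:I_{nm}\to I_n$ is induced by $\Gamma_0(nm)g\mapsto\Gamma_0(n)g$. $\Pi_Nu=(u(R_i^{N,1}z))_{i\in I_N}$. $R_\zeta(z)=\frac{y}{(x-\zeta)^2+y^2}$ for $z=x+iy$; $\eta(u,v)=(v\partial_yu-u\partial_yv)dx+(u\partial_xv-v\partial_xu)dy$; $(\mathrm{P}_N\vec u)_i(\zeta)=\int_0^{i\infty}\eta(u_i,R_\zeta^\beta)$. *)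

theory Defs
  imports "HOL-Analysis.Analysis"
begin

text \<open>A 2x2 integer matrix (a b; c d) is represented as the tuple (a,b,c,d).\<close>
type_synonym mat2 = "int \<times> int \<times> int \<times> int"

definition mmul :: "mat2 \<Rightarrow> mat2 \<Rightarrow> mat2" where
  "mmul g h = (case g of (a,b,c,d) \<Rightarrow> case h of (a',b',c',d') \<Rightarrow>
     (a*a' + b*c', a*b' + b*d', c*a' + d*c', c*b' + d*d'))"

definition SL2Z :: "mat2 set" where
  "SL2Z = {(a,b,c,d). a*d - b*c = 1}"

definition Gamma0 :: "nat \<Rightarrow> mat2 set" where
  "Gamma0 N = {(a,b,c,d). (a,b,c,d) \<in> SL2Z \<and> int N dvd c}"

definition coset :: "nat \<Rightarrow> mat2 \<Rightarrow> mat2 set" where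
  "coset N g = {mmul h g | h. h \<in> Gamma0 N}"

text \<open>The index set I_N: the right cosets Gamma_0(N) \ SL(2,Z) themselves
  (the labels [c:d]_N are in bijection with them).\<close>
definition cosets :: "nat \<Rightarrow> mat2 set set" where
  "cosets N = coset N ` SL2Z"

text \<open>sigma_{m,n}: I_{nm} -> I_n induced by Gamma_0(nm) g |-> Gamma_0(n) g.\<close>
definition sigma :: "nat \<Rightarrow> nat \<Rightarrow> mat2 set \<Rightarrow> mat2 set" where
  "sigma m n C = coset n (SOME g. g \<in> C)"

definition is_reps :: "nat \<Rightarrow> (mat2 set \<Rightarrow> mat2) \<Rightarrow> bool" where
  "is_reps N R \<longleftrightarrow> (\<forall>C\<in>cosets N. R C \<in> C)"

definition moeb :: "mat2 \<Rightarrow> complex \<Rightarrow> complex" where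
  "moeb g z = (case g of (a,b,c,d) \<Rightarrow>
     (of_int a * z + of_int b) / (of_int c * z + of_int d))"

definition H :: "complex set" where
  "H = {z. Im z > 0}"

definition dx :: "(complex \<Rightarrow> complex) \<Rightarrow> complex \<Rightarrow> complex" where
  "dx f z = vector_derivative (\<lambda>t::real. f (z + of_real t)) (at 0)"

definition dy :: "(complex \<Rightarrow> complex) \<Rightarrow> complex \<Rightarrow> complex" where
  "dy f z = vector_derivative (\<lambda>t::real. f (z + \<i> * of_real t)) (at 0)"

definition real_analytic_on :: "complex set \<Rightarrow> (complex \<Rightarrow> complex) \<Rightarrow> bool" where
  "real_analytic_on S f \<longleftrightarrow>
     (\<forall>z0\<in>S. \<exists>r>0. \<exists>a :: nat \<Rightarrow> nat \<Rightarrow> complex. \<forall>w\<in>ball z0 r.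
        ((\<lambda>(j,k). norm (a j k * of_real ((Re w - Re z0) ^ j * (Im w - Im z0) ^ k)))
          summable_on UNIV) \<and>
        ((\<lambda>(j,k). a j k * of_real ((Re w - Re z0) ^ j * (Im w - Im z0) ^ k))
          has_sum f w) UNIV)"

definition maass_cusp :: "nat \<Rightarrow> complex \<Rightarrow> (complex \<Rightarrow> complex) \<Rightarrow> bool" where
  "maass_cusp N \<beta> u \<longleftrightarrow>
     real_analytic_on H u \<and>
     (\<forall>g\<in>Gamma0 N. \<forall>z\<in>H. u (moeb g z) = u z) \<and>
     (\<forall>z\<in>H. - (of_real ((Im z)^2)) * (dx (dx u) z + dy (dy u) z) = \<beta> * (1 - \<beta>) * u z) \<and>
     (\<forall>g\<in>SL2Z. \<forall>k::nat. \<exists>C. \<forall>z. Im z \<ge> 1 \<longrightarrow>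
          norm (u (moeb g z)) \<le> C * (Im z) powr (- real k))"

definition Pi_map :: "(mat2 set \<Rightarrow> mat2) \<Rightarrow> (complex \<Rightarrow> complex) \<Rightarrow> mat2 set \<Rightarrow> complex \<Rightarrow> complex" where
  "Pi_map R u = (\<lambda>i z. u (moeb (R i) z))"

definition Rzeta :: "complex \<Rightarrow> complex \<Rightarrow> complex" where
  "Rzeta \<zeta> z = of_real (Im z) / ((of_real (Re z) - \<zeta>)^2 + of_real ((Im z)^2))"

text \<open>The 1-form eta(u,v) = P dx + Q dy, represented by the pair (P,Q).\<close>
definition eta :: "(complex \<Rightarrow> complex) \<Rightarrow> (complex \<Rightarrow> complex) \<Rightarrow> complex \<Rightarrow> complex \<times> complex" where
  "eta u v = (\<lambda>z. (v z * dy u z - u z * dy v z, u z * dx v z - v z * dx u z))"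

text \<open>Integral of a 1-form along the path t |-> i t, t from 0 to infinity.\<close>
definition int_0_iinf :: "(complex \<Rightarrow> complex \<times> complex) \<Rightarrow> complex" where
  "int_0_iinf \<omega> = integral {0<..} (\<lambda>t::real.
     fst (\<omega> (\<i> * of_real t)) * of_real (Re \<i>) + snd (\<omega> (\<i> * of_real t)) * of_real (Im \<i>))"

definition P_map :: "complex \<Rightarrow> (mat2 set \<Rightarrow> complex \<Rightarrow> complex) \<Rightarrow> mat2 set \<Rightarrow> complex \<Rightarrow> complex" where
  "P_map \<beta> uv = (\<lambda>i \<zeta>. int_0_iinf (eta (uv i) (\<lambda>z. (Rzeta \<zeta> z) powr \<beta>)))"

end

theory Submission
  imports Defs
begin

text \<open>Since R1 j = h R2(sigma j) with h in Gamma_0(n) and u is Gamma_0(n)-invariant, the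
  functions u o R1 j and u o R2(sigma j) agree on the whole upper half plane H. The 1-form eta
  involves only values and first partial derivatives, which are determined by the germ on the
  open set H, so the two integrands agree along the imaginary axis. Only the Gamma_0(n)-invariance
  of u enters.\<close>

lemma vector_derivative_comp_cong_open:
  assumes "open S" and "isCont p 0" and "p 0 \<in> S" and "\<And>w. w \<in> S \<Longrightarrow> f w = g w"
  shows "vector_derivative (\<lambda>t::real. f (p t)) (at 0) = vector_derivative (\<lambda>t. g (p t)) (at 0)"
proof -
  obtain T where "open T" "0 \<in> T" "\<forall>t\<in>T. p t \<in> S"
    using assms(1-3) continuous_at_open by metis
  then have "eventually (\<lambda>t. t \<in> UNIV \<longrightarrow> f (p t) = g (p t)) (nhds 0)"
    using assms(4) by (auto simp: eventually_nhds)
  then show ?thesis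
    by (rule vector_derivative_cong_eq) auto
qed

lemma
  assumes "open S" and "z \<in> S" and "\<And>w. w \<in> S \<Longrightarrow> f w = g w"
  shows dx_cong_open: "dx f z = dx g z"
    and dy_cong_open: "dy f z = dy g z"
  unfolding dx_def dy_def
  by (intro vector_derivative_comp_cong_open[OF assms(1) _ _ assms(3)];
      use assms(2) in \<open>simp add: continuous_intros\<close>)+

lemma eta_cong_open:
  assumes "open S" and "z \<in> S" and "\<And>w. w \<in> S \<Longrightarrow> u w = u' w"
  shows "eta u v z = eta u' v z"
  using assms dx_cong_open[OF assms] dy_cong_open[OF assms] by (simp add: eta_def)

lemma open_H: "open H"
  unfolding H_def by (simp add: open_halfspace_Im_gt)

lemma imaginary_axis_in_H: "t > 0 \<Longrightarrow> \<i> * of_real t \<in> H"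
  by (simp add: H_def)

lemma int_0_iinf_cong_H:
  assumes "\<And>z. z \<in> H \<Longrightarrow> \<omega> z = \<omega>' z"
  shows "int_0_iinf \<omega> = int_0_iinf \<omega>'"
  unfolding int_0_iinf_def
  by (intro integral_cong) (simp add: assms imaginary_axis_in_H)

lemma P_map_cong_H:
  assumes "\<And>z. z \<in> H \<Longrightarrow> f i z = g k z"
  shows "P_map \<beta> f i = P_map \<beta> g k"
  unfolding P_map_def
  by (intro ext int_0_iinf_cong_H eta_cong_open[OF open_H]) (auto simp: assms)

text \<open>No determinant condition is needed: if the outer denominator vanishes, both sides are
  the junk value 0 of division by zero.\<close>

lemma moeb_mmul:
  assumes "of_int c * z + of_int d \<noteq> 0"
  shows "moeb (mmul h (a, b, c, d)) z = moeb h (moeb (a, b, c, d) z)"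
proof -
  obtain a' b' c' d' where h: "h = (a', b', c', d')" by (cases h)
  define N D where "N = of_int a * z + of_int b" and "D = of_int c * z + of_int d"
  have "D \<noteq> 0" using assms by (simp add: D_def)
  have "moeb h (moeb (a, b, c, d) z)
      = (of_int a' * (N / D) + of_int b') / (of_int c' * (N / D) + of_int d')"
    by (simp add: h moeb_def N_def D_def)
  also have "\<dots> = (of_int a' * N + of_int b' * D) / (of_int c' * N + of_int d' * D)"
    using \<open>D \<noteq> 0\<close> by (simp add: divide_simps)
  also have "\<dots> = moeb (mmul h (a, b, c, d)) z"
    by (simp add: h moeb_def mmul_def N_def D_def algebra_simps)
  finally show ?thesis ..
qed

lemma moeb_denominator_nonzero:
  assumes "(a, b, c, d) \<in> SL2Z" and "z \<in> H"
  shows "of_int c * z + of_int d \<noteq> 0"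
proof
  assume zero: "of_int c * z + of_int d = 0"
  then have "c = 0" using assms(2) by (simp add: H_def complex_eq_iff)
  with zero have "d = 0" by simp
  with \<open>c = 0\<close> assms(1) show False by (simp add: SL2Z_def)
qed

lemma Im_moeb:
  "Im (moeb (a, b, c, d) z) = of_int (a * d - b * c) * Im z / (cmod (of_int c * z + of_int d))\<^sup>2"
  by (simp add: moeb_def Im_divide cmod_power2 algebra_simps)

lemma moeb_in_H:
  assumes "g \<in> SL2Z" and "z \<in> H"
  shows "moeb g z \<in> H"
proof -
  obtain a b c d where g: "g = (a, b, c, d)" by (cases g)
  have "of_int c * z + of_int d \<noteq> 0"
    using moeb_denominator_nonzero assms by (simp add: g)
  then show ?thesis
    using assms by (simp add: g H_def Im_moeb SL2Z_def)
qed

lemma moeb_mmul_SL2Z: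
  assumes "g \<in> SL2Z" and "z \<in> H"
  shows "moeb (mmul h g) z = moeb h (moeb g z)"
  using assms moeb_mmul moeb_denominator_nonzero by (cases g) blast

lemma mmul_in_SL2Z: "h \<in> SL2Z \<Longrightarrow> g \<in> SL2Z \<Longrightarrow> mmul h g \<in> SL2Z"
  by (auto simp: SL2Z_def mmul_def algebra_simps)

lemma Gamma0_subset_SL2Z: "Gamma0 N \<subseteq> SL2Z"
  by (auto simp: Gamma0_def)

lemma coset_subset_SL2Z: "g \<in> SL2Z \<Longrightarrow> coset N g \<subseteq> SL2Z"
  using Gamma0_subset_SL2Z mmul_in_SL2Z unfolding coset_def by blast

lemma self_in_coset: "g \<in> coset N g"
proof -
  have "(1, 0, 0, 1) \<in> Gamma0 N" by (simp add: Gamma0_def SL2Z_def)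
  moreover have "mmul (1, 0, 0, 1) g = g" by (cases g) (simp add: mmul_def)
  ultimately show ?thesis unfolding coset_def by force
qed

lemma cosets_subset_SL2Z: "C \<in> cosets N \<Longrightarrow> C \<subseteq> SL2Z"
  using coset_subset_SL2Z unfolding cosets_def by blast

lemma sigma_in_cosets:
  assumes "C \<in> cosets N"
  shows "sigma m n C \<in> cosets n"
proof -
  obtain g where "C = coset N g" using assms by (auto simp: cosets_def)
  then have "(SOME g. g \<in> C) \<in> C"
    using self_in_coset by (metis someI)
  then show ?thesis
    using assms cosets_subset_SL2Z by (auto simp: sigma_def cosets_def)
qed

lemma reps_in_SL2Z: "is_reps N R \<Longrightarrow> C \<in> cosets N \<Longrightarrow> R C \<in> SL2Z"
  using cosets_subset_SL2Z by (auto simp: is_reps_def)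

lemma Gamma0_invariant_mmul:
  assumes "\<forall>h\<in>Gamma0 N. \<forall>z\<in>H. u (moeb h z) = u z"
    and "h \<in> Gamma0 N" and "g \<in> SL2Z" and "z \<in> H"
  shows "u (moeb (mmul h g) z) = u (moeb g z)"
  using assms moeb_mmul_SL2Z moeb_in_H by simp

theorem mainTheorem12:
  fixes n m :: nat and \<beta> :: complex and u :: "complex \<Rightarrow> complex"
    and R1 R2 :: "mat2 set \<Rightarrow> mat2"
  assumes "n \<ge> 1" and "m \<ge> 1"
    and "maass_cusp n \<beta> u"
    and "is_reps (n * m) R1" and "is_reps n R2"
    and "\<forall>j\<in>cosets (n * m). \<exists>h\<in>Gamma0 n. R1 j = mmul h (R2 (sigma m n j))"
  shows "\<forall>j\<in>cosets (n * m).
           P_map \<beta> (Pi_map R1 u) j = P_map \<beta> (Pi_map R2 u) (sigma m n j)"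
proof
  fix j assume j: "j \<in> cosets (n * m)"
  obtain h where h: "h \<in> Gamma0 n" "R1 j = mmul h (R2 (sigma m n j))"
    using assms(6) j by blast
  have rep: "R2 (sigma m n j) \<in> SL2Z"
    using reps_in_SL2Z[OF assms(5) sigma_in_cosets[OF j]] .
  have inv: "\<forall>g\<in>Gamma0 n. \<forall>z\<in>H. u (moeb g z) = u z"
    using assms(3) by (simp add: maass_cusp_def)
  show "P_map \<beta> (Pi_map R1 u) j = P_map \<beta> (Pi_map R2 u) (sigma m n j)"
    by (rule P_map_cong_H) (simp add: Pi_map_def h(2) Gamma0_invariant_mmul[OF inv h(1) rep])
qed

end
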